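(* Let $T$ be a countable Dedekind domain such that $T/J$ is finite for every nonzero ideal $J\subset T$, let $a\in T$ be nonzero and not a unit, and let $R=T/aT$. Let $N$ be a finite $R$-module, $\delta>0$ a real number, $\epsilon_R>0$ a real number, and $n$ a positive integer; let $V=R^n$. Let $X$ be an $\epsilon_R$-balanced random vector valued in $V$, let $F\in\mathrm{Hom}_R(V,N)$ be a code of distance $\delta n$, and let $A\in N$. Then \[\left|\mathbb{P}(FX=A)-|N|^{-1}\right|\leq\exp(-\epsilon_R\delta n/|R|^2).\]
   Context: A random variable $y$ valued in $R$ is $\epsilon_R$-balanced if for every ideal $I$ of $R$ such that $R/I$ is an elementary abelian group (i.e. $R/I\simeq(\mathbb{Z}/p\mathbb{Z})^m$ as abelian groups for some prime $p$ and $m>0$), the image of $y$ in $R/I$ lies in any given proper affine $\mathbb{F}_p$-subspace of $R/I$ with probability at most $1-\epsilon_R$. A random vector is $\epsilon_R$-balanced if its entries are independent and $\epsilon_R$-balanced. Let $v_1,\dots,v_n$ be the standard basis of $V=R^n$; for $\sigma\subset[n]=\{1,\dots,n\}$, $V_\sigma$ is the submodule generated by the $v_i$ with $i\notin\sigma$. $F\in\mathrm{Hom}_R(V,N)$ is a code of distance $w$ if $F(V_\sigma)=N$ for every $\sigma\subset[n]$ with $|\sigma|<w$. *)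

theory Defs
  imports "HOL-Probability.Probability" "HOL-Computational_Algebra.Fraction_Field"
    "HOL-Computational_Algebra.Polynomial" "HOL-Library.Function_Algebras"
begin

definition is_ideal :: "'a::comm_ring_1 set \<Rightarrow> bool" where
  "is_ideal I \<longleftrightarrow> 0 \<in> I \<and> (\<forall>x\<in>I. \<forall>y\<in>I. x + y \<in> I) \<and> (\<forall>r. \<forall>x\<in>I. r * x \<in> I)"

definition is_prime_ideal :: "'a::comm_ring_1 set \<Rightarrow> bool" where
  "is_prime_ideal P \<longleftrightarrow> is_ideal P \<and> P \<noteq> UNIV \<and> (\<forall>x y. x * y \<in> P \<longrightarrow> x \<in> P \<or> y \<in> P)"

definition is_maximal_ideal :: "'a::comm_ring_1 set \<Rightarrow> bool" where
  "is_maximal_ideal P \<longleftrightarrow> is_ideal P \<and> P \<noteq> UNIV \<and>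
     (\<forall>J. is_ideal J \<and> P \<subseteq> J \<longrightarrow> J = P \<or> J = UNIV)"

definition noetherian_ring :: "'a::comm_ring_1 itself \<Rightarrow> bool" where
  "noetherian_ring _ \<longleftrightarrow> (\<forall>I::'a set. is_ideal I \<longrightarrow>
     (\<exists>S. finite S \<and> I = {\<Sum>s\<in>S. c s * s | c. True}))"

definition integrally_closed :: "'a::idom itself \<Rightarrow> bool" where
  "integrally_closed _ \<longleftrightarrow> (\<forall>z::'a fract.
     (\<exists>p::'a poly. lead_coeff p = 1 \<and> poly (map_poly (\<lambda>c. Fract c 1) p) z = 0)
       \<longrightarrow> (\<exists>t. z = Fract t 1))"

definition dedekind_domain :: "'a::idom itself \<Rightarrow> bool" where
  "dedekind_domain T \<longleftrightarrow> noetherian_ring T \<and> integrally_closed T \<and>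
     (\<forall>P::'a set. is_prime_ideal P \<and> P \<noteq> {0} \<longrightarrow> is_maximal_ideal P)"

definition finite_quotient :: "'a::comm_ring_1 set \<Rightarrow> bool" where
  "finite_quotient J \<longleftrightarrow> finite ((\<lambda>x. {y. x - y \<in> J}) ` UNIV)"

(* R/I is an elementary abelian p-group (nontrivial, exponent p) *)
definition elem_abelian_quot :: "'a::comm_ring_1 set \<Rightarrow> nat \<Rightarrow> bool" where
  "elem_abelian_quot I p \<longleftrightarrow> is_ideal I \<and> prime p \<and> I \<noteq> UNIV \<and> of_nat p \<in> I"

(* preimage in R of a proper affine F_p-subspace of R/I: c + H with I \<subseteq> H \<subsetneq> R, H additive subgroup *)
definition proper_affine_preimage :: "'a::comm_ring_1 set \<Rightarrow> 'a set \<Rightarrow> bool" where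
  "proper_affine_preimage I S \<longleftrightarrow> (\<exists>c H. 0 \<in> H \<and> (\<forall>x\<in>H. \<forall>y\<in>H. x + y \<in> H \<and> - x \<in> H)
      \<and> I \<subseteq> H \<and> H \<noteq> UNIV \<and> S = (\<lambda>h. c + h) ` H)"

definition balanced_rv :: "'w measure \<Rightarrow> real \<Rightarrow> ('w \<Rightarrow> 'a::comm_ring_1) \<Rightarrow> bool" where
  "balanced_rv M \<epsilon> Y \<longleftrightarrow> Y \<in> measurable M (count_space UNIV) \<and>
     (\<forall>I p S. elem_abelian_quot I p \<and> proper_affine_preimage I S \<longrightarrow>
        measure M {\<omega>\<in>space M. Y \<omega> \<in> S} \<le> 1 - \<epsilon>)"

definition balanced_vec :: "'w measure \<Rightarrow> real \<Rightarrow> ('k \<Rightarrow> 'w \<Rightarrow> 'a::comm_ring_1) \<Rightarrow> bool" where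
  "balanced_vec M \<epsilon> X \<longleftrightarrow> prob_space.indep_vars M (\<lambda>_. count_space UNIV) X UNIV \<and>
     (\<forall>i. balanced_rv M \<epsilon> (X i))"

(* V_sigma: submodule generated by v_i, i \<notin> sigma *)
definition Vsub :: "'k set \<Rightarrow> ('k \<Rightarrow> 'a::comm_ring_1) set" where
  "Vsub \<sigma> = {x. \<forall>i\<in>\<sigma>. x i = 0}"

definition is_code :: "(('k::finite \<Rightarrow> 'a::comm_ring_1) \<Rightarrow> 'n) \<Rightarrow> real \<Rightarrow> bool" where
  "is_code F w \<longleftrightarrow> (\<forall>\<sigma>::'k set. real (card \<sigma>) < w \<longrightarrow> F ` Vsub \<sigma> = UNIV)"

end

theory Submission
  imports Defs
begin

(* Expand the indicator of FX = A over the additive characters \<xi> of N. The trivial character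
   contributes |N|^-1; by independence, the term of \<xi> is a product over the coordinates i of
   the Fourier coefficients E \<psi>_i(X_i) of the characters \<psi>_i(r) = \<xi>(r F(v_i)) of R.
   A nontrivial \<xi> is nontrivial on F(V_\<sigma>) = N for |\<sigma>| < \<delta>n, so at least \<delta>n of the
   \<psi>_i are nontrivial.
   A nontrivial \<psi> satisfies 1 - Re \<psi>(u) \<ge> 2/|R|^2 outside a proper subgroup K of R that
   contains an ideal I with R/I elementary abelian, and balancedness puts mass \<ge> \<epsilon> outside
   every coset of K; hence |E \<psi>(X_i)|^2 \<le> 1 - 2\<epsilon>/|R|^2 \<le> exp(-2\<epsilon>/|R|^2). *)

primrec nat_mult :: "nat \<Rightarrow> 'a::comm_monoid_add \<Rightarrow> 'a" where
  "nat_mult 0 x = 0"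
| "nat_mult (Suc k) x = x + nat_mult k x"

lemma nat_mult_add: "nat_mult (a + b) x = nat_mult a x + nat_mult b x"
  by (induction a) (auto simp: add.assoc)

lemma nat_mult_add_right: "nat_mult k (x + y) = nat_mult k x + nat_mult k y"
  by (induction k) (auto simp: algebra_simps)

lemma nat_mult_zero_right [simp]: "nat_mult k 0 = 0"
  by (induction k) auto

lemma nat_mult_mult: "nat_mult (a * b) x = nat_mult a (nat_mult b x)"
  by (induction a) (auto simp: nat_mult_add nat_mult_add_right)

lemma nat_mult_diff:
  fixes x :: "'a::ab_group_add"
  shows "a \<le> b \<Longrightarrow> nat_mult (b - a) x = nat_mult b x - nat_mult a x"
  by (metis add_diff_cancel_right' le_add_diff_inverse2 nat_mult_add)

lemma nat_mult_eq_of_nat_mult: "nat_mult k x = of_nat k * (x::'a::semiring_1)"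
  by (induction k) (auto simp: algebra_simps)

lemma ex_nat_mult_eq_0:
  fixes x :: "'a::ab_group_add"
  assumes fin: "finite (UNIV :: 'a set)"
  shows "\<exists>d>0. d \<le> CARD('a) \<and> nat_mult d x = 0"
proof -
  have "\<not> inj_on (\<lambda>k. nat_mult k x) {0..CARD('a)}"
  proof
    assume "inj_on (\<lambda>k. nat_mult k x) {0..CARD('a)}"
    then have "card {0..CARD('a)} \<le> CARD('a)"
      by (rule card_inj_on_le[OF _ subset_UNIV fin])
    then show False by simp
  qed
  then obtain a b where ab: "a \<le> CARD('a)" "b \<le> CARD('a)" "a < b"
    "nat_mult a x = nat_mult b x"
    unfolding inj_on_def by (auto intro: linorder_neqE_nat)
  then show ?thesis
    using nat_mult_diff[of a b x] by (intro exI[of _ "b - a"]) auto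
qed

section \<open>Additive characters of a finite abelian group\<close>

definition add_subgroup :: "'a::ab_group_add set \<Rightarrow> bool" where
  "add_subgroup H \<longleftrightarrow> 0 \<in> H \<and> (\<forall>x\<in>H. \<forall>y\<in>H. x + y \<in> H) \<and> (\<forall>x\<in>H. - x \<in> H)"

definition char_on :: "'a::ab_group_add set \<Rightarrow> ('a \<Rightarrow> complex) \<Rightarrow> bool" where
  "char_on H \<xi> \<longleftrightarrow> \<xi> 0 = 1 \<and> (\<forall>x\<in>H. \<forall>y\<in>H. \<xi> (x + y) = \<xi> x * \<xi> y)"

abbreviation additive_char :: "('a::ab_group_add \<Rightarrow> complex) \<Rightarrow> bool" where
  "additive_char \<equiv> char_on UNIV"

definition characters :: "('a::ab_group_add \<Rightarrow> complex) set" where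
  "characters = {\<xi>. additive_char \<xi>}"

lemma add_subgroup_UNIV: "add_subgroup UNIV"
  by (simp add: add_subgroup_def)

lemma add_subgroup_diff: "add_subgroup H \<Longrightarrow> x \<in> H \<Longrightarrow> y \<in> H \<Longrightarrow> x - y \<in> H"
  unfolding add_subgroup_def by (simp only: diff_conv_add_uminus)

lemma add_subgroup_nat_mult: "add_subgroup H \<Longrightarrow> x \<in> H \<Longrightarrow> nat_mult k x \<in> H"
  by (induction k) (auto simp: add_subgroup_def)

lemma additive_char_add: "additive_char \<xi> \<Longrightarrow> \<xi> (x + y) = \<xi> x * \<xi> y"
  by (simp add: char_on_def)

lemma additive_char_zero: "additive_char \<xi> \<Longrightarrow> \<xi> 0 = 1"
  by (simp add: char_on_def)

lemma additive_char_neg: "additive_char \<xi> \<Longrightarrow> \<xi> x * \<xi> (- x) = 1"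
  by (simp flip: additive_char_add add: additive_char_zero)

lemma additive_char_sum:
  assumes "additive_char \<xi>" "finite S"
  shows "\<xi> (\<Sum>i\<in>S. f i) = (\<Prod>i\<in>S. \<xi> (f i))"
  using assms(2) by (induction S rule: finite_induct) (auto simp: assms additive_char_add additive_char_zero)

lemma char_on_nat_mult:
  "add_subgroup H \<Longrightarrow> char_on H \<xi> \<Longrightarrow> x \<in> H \<Longrightarrow> \<xi> (nat_mult k x) = \<xi> x ^ k"
  by (induction k) (auto simp: char_on_def add_subgroup_nat_mult)

lemma additive_char_of_nat_mult:
  assumes "additive_char \<xi>"
  shows "\<xi> (of_nat k * t) = \<xi> t ^ k"
  using char_on_nat_mult[OF add_subgroup_UNIV assms UNIV_I, of k t]
  by (simp add: nat_mult_eq_of_nat_mult)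

lemma char_on_root_of_unity:
  fixes \<xi> :: "'a::ab_group_add \<Rightarrow> complex"
  assumes "finite (UNIV :: 'a set)" "add_subgroup H" "char_on H \<xi>" "x \<in> H"
  shows "\<exists>d>0. d \<le> CARD('a) \<and> \<xi> x ^ d = 1"
proof -
  obtain d where "0 < d" "d \<le> CARD('a)" "nat_mult d x = 0"
    using ex_nat_mult_eq_0[OF assms(1)] by blast
  then show ?thesis
    using char_on_nat_mult[OF assms(2-4), of d] assms(3) by (auto simp: char_on_def)
qed

lemma norm_char_on:
  fixes \<xi> :: "'a::ab_group_add \<Rightarrow> complex"
  assumes "finite (UNIV :: 'a set)" "add_subgroup H" "char_on H \<xi>" "x \<in> H"
  shows "norm (\<xi> x) = 1"
  using char_on_root_of_unity[OF assms] power_eq_1_iff by blast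

lemma additive_char_mult:
  "additive_char \<xi> \<Longrightarrow> additive_char \<zeta> \<Longrightarrow> additive_char (\<lambda>x. \<xi> x * \<zeta> x)"
  by (simp add: char_on_def)

lemma additive_char_uminus:
  assumes "additive_char \<xi>" shows "additive_char (\<lambda>x. \<xi> (- x))"
  using assms by (simp add: char_on_def flip: additive_char_add[OF assms])

definition subgroup_adjoin :: "'a::ab_group_add set \<Rightarrow> 'a \<Rightarrow> 'a set" where
  "subgroup_adjoin H g = {h + nat_mult j g | h j. h \<in> H}"

lemma subset_subgroup_adjoin: "H \<subseteq> subgroup_adjoin H g"
  unfolding subgroup_adjoin_def by (force intro: exI[of _ 0])

lemma mem_subgroup_adjoin: "add_subgroup H \<Longrightarrow> g \<in> subgroup_adjoin H g"
  unfolding subgroup_adjoin_def add_subgroup_def by (force intro: exI[of _ 1])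

lemma add_subgroup_adjoin:
  assumes fin: "finite (UNIV :: 'a::ab_group_add set)" and H: "add_subgroup H"
  shows "add_subgroup (subgroup_adjoin H (g::'a))"
proof -
  obtain c where c: "c > 0" "nat_mult c g = 0" using ex_nat_mult_eq_0[OF fin] by blast
  have neg: "nat_mult ((c - 1) * j) g = - nat_mult j g" for j
  proof -
    have "nat_mult ((c - 1) * j) g + nat_mult j g = nat_mult ((c - 1) * j + j) g"
      by (rule nat_mult_add[symmetric])
    also have "(c - 1) * j + j = j * c" using c(1) by (cases c) auto
    also have "nat_mult (j * c) g = 0" by (simp add: nat_mult_mult c(2))
    finally show ?thesis by (simp add: eq_neg_iff_add_eq_0)
  qed
  show ?thesis
    unfolding add_subgroup_def subgroup_adjoin_def
  proof (intro conjI ballI)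
    show "0 \<in> {h + nat_mult j g |h j. h \<in> H}"
      using H unfolding add_subgroup_def by (intro CollectI exI[of _ 0]) simp
  next
    fix x y assume "x \<in> {h + nat_mult j g |h j. h \<in> H}" "y \<in> {h + nat_mult j g |h j. h \<in> H}"
    then obtain h1 j1 h2 j2 where "x = h1 + nat_mult j1 g" "y = h2 + nat_mult j2 g" "h1 \<in> H" "h2 \<in> H"
      by blast
    moreover have "h1 + nat_mult j1 g + (h2 + nat_mult j2 g) = (h1 + h2) + nat_mult (j1 + j2) g"
      by (simp add: nat_mult_add algebra_simps)
    ultimately show "x + y \<in> {h + nat_mult j g |h j. h \<in> H}"
      using H unfolding add_subgroup_def by blast
  next
    fix x assume "x \<in> {h + nat_mult j g |h j. h \<in> H}"
    then obtain h j where "x = h + nat_mult j g" "h \<in> H" by blast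
    moreover have "- (h + nat_mult j g) = - h + nat_mult ((c - 1) * j) g"
      unfolding neg by simp
    ultimately show "- x \<in> {h + nat_mult j g |h j. h \<in> H}"
      using H unfolding add_subgroup_def by blast
  qed
qed

lemma char_on_adjoin_well_defined:
  assumes H: "add_subgroup H" and \<xi>: "char_on H \<xi>"
    and compat: "\<And>d. nat_mult d g \<in> H \<Longrightarrow> z ^ d = \<xi> (nat_mult d g)"
  assumes "h1 \<in> H" "h2 \<in> H" "h1 + nat_mult j1 g = h2 + nat_mult j2 g"
  shows "\<xi> h1 * z ^ j1 = \<xi> h2 * z ^ j2"
proof -
  have *: "\<xi> h1 * z ^ j1 = \<xi> h2 * z ^ j2"
    if h: "h1 \<in> H" "h2 \<in> H" "h1 + nat_mult j1 g = h2 + nat_mult j2 g" and j: "j1 \<le> j2"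
    for h1 h2 j1 j2
  proof -
    have "h1 - h2 = nat_mult j2 g - nat_mult j1 g"
      using h(3) by (simp add: algebra_simps)
    then have "nat_mult (j2 - j1) g = h1 - h2"
      by (simp add: nat_mult_diff[OF j])
    then have "z ^ (j2 - j1) = \<xi> (h1 - h2)"
      using compat add_subgroup_diff[OF H h(1,2)] by simp
    moreover have "\<xi> (h2 + (h1 - h2)) = \<xi> h2 * \<xi> (h1 - h2)"
      using \<xi> h(2) add_subgroup_diff[OF H h(1,2)] unfolding char_on_def by blast
    moreover have "z ^ j2 = z ^ (j2 - j1) * z ^ j1"
      using j by (simp flip: power_add)
    ultimately show ?thesis by (simp add: mult.assoc)
  qed
  show ?thesis
    using *[OF assms(4-6)] *[OF assms(5,4) assms(6)[symmetric]] by (cases "j1 \<le> j2") auto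
qed

lemma char_on_adjoin_extension:
  assumes H: "add_subgroup H" and \<xi>: "char_on H \<xi>"
    and compat: "\<And>d. nat_mult d g \<in> H \<Longrightarrow> z ^ d = \<xi> (nat_mult d g)"
  shows "\<exists>\<xi>'. char_on (subgroup_adjoin H g) \<xi>' \<and> (\<forall>x\<in>H. \<xi>' x = \<xi> x) \<and> \<xi>' g = z"
proof -
  define \<xi>' where "\<xi>' x = (SOME w. \<exists>h\<in>H. \<exists>j. x = h + nat_mult j g \<and> w = \<xi> h * z ^ j)" for x
  have val: "\<xi>' (h + nat_mult j g) = \<xi> h * z ^ j" if "h \<in> H" for h j
  proof -
    have "\<exists>h'\<in>H. \<exists>j'. h + nat_mult j g = h' + nat_mult j' g \<and> \<xi>' (h + nat_mult j g) = \<xi> h' * z ^ j'"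
      unfolding \<xi>'_def by (rule someI_ex) (use that in blast)
    then show ?thesis
      using char_on_adjoin_well_defined[OF H \<xi> compat that] by metis
  qed
  have 0: "0 \<in> H" "\<xi> 0 = 1" using H \<xi> by (simp_all add: add_subgroup_def char_on_def)
  have "char_on (subgroup_adjoin H g) \<xi>'"
    unfolding char_on_def subgroup_adjoin_def
  proof safe
    show "\<xi>' 0 = 1" using val[OF 0(1), of 0] 0 by simp
  next
    fix h1 h2 j1 j2 assume h: "h1 \<in> H" "h2 \<in> H"
    have "h1 + nat_mult j1 g + (h2 + nat_mult j2 g) = (h1 + h2) + nat_mult (j1 + j2) g"
      by (simp add: nat_mult_add algebra_simps)
    moreover have "h1 + h2 \<in> H" using H h by (simp add: add_subgroup_def)
    ultimately show "\<xi>' (h1 + nat_mult j1 g + (h2 + nat_mult j2 g))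
        = \<xi>' (h1 + nat_mult j1 g) * \<xi>' (h2 + nat_mult j2 g)"
      using \<xi> h by (simp only: val) (simp add: char_on_def power_add mult_ac)
  qed
  moreover have "\<forall>x\<in>H. \<xi>' x = \<xi> x" using val[of _ 0] by simp
  moreover have "\<xi>' g = z" using val[OF 0(1), of 1] 0 by simp
  ultimately show ?thesis by blast
qed

lemma least_multiple_root_compatible:
  assumes H: "add_subgroup H" and \<xi>: "char_on H \<xi>"
    and k: "0 < k" "nat_mult k g \<in> H" and least: "\<And>j. 0 < j \<Longrightarrow> j < k \<Longrightarrow> nat_mult j g \<notin> H"
    and z: "z ^ k = \<xi> (nat_mult k g)" and d: "nat_mult d g \<in> H"
  shows "z ^ d = \<xi> (nat_mult d g)"
proof -
  define q r where "q = d div k" and "r = d mod k"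
  have d_eq: "d = q * k + r" and "r < k" using k(1) by (simp_all add: q_def r_def)
  have split: "nat_mult d g = nat_mult q (nat_mult k g) + nat_mult r g"
    by (simp add: d_eq nat_mult_add nat_mult_mult)
  then have "nat_mult r g = nat_mult d g - nat_mult q (nat_mult k g)" by simp
  then have "nat_mult r g \<in> H"
    using add_subgroup_diff[OF H d add_subgroup_nat_mult[OF H k(2)]] by simp
  then have "r = 0" using least \<open>r < k\<close> by blast
  then have "z ^ d = (z ^ k) ^ q" by (simp add: d_eq mult.commute power_mult)
  also have "\<dots> = \<xi> (nat_mult d g)"
    using split \<open>r = 0\<close> char_on_nat_mult[OF H \<xi> k(2)] z by simp
  finally show ?thesis .
qed

lemma ex_least_nat_mult_mem:
  assumes "finite (UNIV :: 'a::ab_group_add set)" "add_subgroup H"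
  shows "\<exists>k>0. nat_mult k (g::'a) \<in> H \<and> (\<forall>j. 0 < j \<longrightarrow> j < k \<longrightarrow> nat_mult j g \<notin> H)"
proof -
  obtain d where "0 < d \<and> nat_mult d g \<in> H"
    using ex_nat_mult_eq_0[OF assms(1), of g] assms(2) by (force simp: add_subgroup_def)
  then show ?thesis
    using exists_least_iff[of "\<lambda>k. 0 < k \<and> nat_mult k g \<in> H"] by blast
qed

lemma ex_complex_root:
  assumes "0 < k" shows "\<exists>z::complex. z ^ k = w"
proof (cases "w = 0")
  case False
  then have "{z::complex. z ^ k = w} \<noteq> {}" using card_nth_roots[OF False assms] assms by force
  then show ?thesis by blast
qed (use assms in auto)

lemma char_on_extends:
  fixes \<xi> :: "'a::ab_group_add \<Rightarrow> complex"
  assumes fin: "finite (UNIV :: 'a set)"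
  shows "add_subgroup H \<Longrightarrow> char_on H \<xi> \<Longrightarrow> \<exists>\<xi>'. additive_char \<xi>' \<and> (\<forall>x\<in>H. \<xi>' x = \<xi> x)"
proof (induction "card (UNIV - H)" arbitrary: H \<xi> rule: less_induct)
  case less
  show ?case
  proof (cases "H = UNIV")
    case True
    then show ?thesis using less.prems by blast
  next
    case False
    then obtain g where g: "g \<notin> H" by blast
    obtain k where k: "0 < k" "nat_mult k g \<in> H" "\<And>j. 0 < j \<Longrightarrow> j < k \<Longrightarrow> nat_mult j g \<notin> H"
      using ex_least_nat_mult_mem[OF fin less.prems(1)] by blast
    obtain z where "z ^ k = \<xi> (nat_mult k g)" using ex_complex_root[OF k(1)] by blast
    then obtain \<xi>1 where \<xi>1: "char_on (subgroup_adjoin H g) \<xi>1" "\<forall>x\<in>H. \<xi>1 x = \<xi> x"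
      using char_on_adjoin_extension[OF less.prems least_multiple_root_compatible[OF less.prems k]]
      by blast
    have "card (UNIV - subgroup_adjoin H g) < card (UNIV - H)"
      using subset_subgroup_adjoin[of H g] mem_subgroup_adjoin[OF less.prems(1)] g fin
      by (intro psubset_card_mono) auto
    then obtain \<xi>2 where "additive_char \<xi>2" "\<forall>x\<in>subgroup_adjoin H g. \<xi>2 x = \<xi>1 x"
      using less.hyps add_subgroup_adjoin[OF fin less.prems(1)] \<xi>1(1) by blast
    then show ?thesis using \<xi>1(2) subset_subgroup_adjoin[of H g] by (intro exI[of _ \<xi>2]) auto
  qed
qed

lemma additive_char_separates:
  fixes y :: "'a::ab_group_add"
  assumes fin: "finite (UNIV :: 'a set)" and y: "y \<noteq> 0"
  shows "\<exists>\<xi>. additive_char \<xi> \<and> \<xi> y \<noteq> 1"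
proof -
  have H: "add_subgroup {0::'a}" and one: "char_on {0::'a} (\<lambda>_. 1)"
    by (simp_all add: add_subgroup_def char_on_def)
  obtain k where k: "0 < k" "nat_mult k y \<in> {0}" "\<And>j. 0 < j \<Longrightarrow> j < k \<Longrightarrow> nat_mult j y \<notin> {0}"
    using ex_least_nat_mult_mem[OF fin H] by blast
  have "k \<noteq> 1" using k(2) y by auto
  then have "\<not> {z::complex. z ^ k = 1} \<subseteq> {1}"
    using card_roots_unity_eq[OF k(1)] card_mono[of "{1::complex}" "{z. z ^ k = 1}"] k(1) by auto
  then obtain z :: complex where z: "z ^ k = 1" "z \<noteq> 1" by blast
  then obtain \<xi>1 where \<xi>1: "char_on (subgroup_adjoin {0} y) \<xi>1" "\<xi>1 y = z"
    using char_on_adjoin_extension[OF H one least_multiple_root_compatible[OF H one k]] by auto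
  obtain \<xi> where "additive_char \<xi>" "\<forall>x\<in>subgroup_adjoin {0} y. \<xi> x = \<xi>1 x"
    using char_on_extends[OF fin add_subgroup_adjoin[OF fin H] \<xi>1(1)] by blast
  then show ?thesis using \<xi>1(2) z(2) mem_subgroup_adjoin[OF H] by metis
qed

lemma finite_characters:
  assumes fin: "finite (UNIV :: 'a::ab_group_add set)"
  shows "finite (characters :: ('a \<Rightarrow> complex) set)"
proof -
  let ?roots = "\<Union>d\<in>{1..CARD('a)}. {z::complex. z ^ d = 1}"
  have "characters \<subseteq> (UNIV :: 'a set) \<rightarrow>\<^sub>E ?roots"
    using char_on_root_of_unity[OF fin add_subgroup_UNIV] by (fastforce simp: characters_def)
  moreover have "finite ((UNIV :: 'a set) \<rightarrow>\<^sub>E ?roots)"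
    using fin by (intro finite_PiE finite_UN_I finite_roots_unity) auto
  ultimately show ?thesis by (rule finite_subset)
qed

lemma sum_additive_char_nontrivial:
  fixes \<xi> :: "'a::ab_group_add \<Rightarrow> complex"
  assumes fin: "finite (UNIV :: 'a set)" and \<xi>: "additive_char \<xi>" and g: "\<xi> g \<noteq> 1"
  shows "(\<Sum>x\<in>UNIV. \<xi> x) = 0"
proof -
  have "(\<Sum>x\<in>UNIV. \<xi> x) = (\<Sum>x\<in>UNIV. \<xi> (g + x))"
    by (rule sum.reindex_bij_witness[of _ "\<lambda>x. g + x" "\<lambda>x. x - g"]) auto
  also have "\<dots> = \<xi> g * (\<Sum>x\<in>UNIV. \<xi> x)"
    by (simp add: additive_char_add[OF \<xi>] sum_distrib_left)
  finally have "(1 - \<xi> g) * (\<Sum>x\<in>UNIV. \<xi> x) = 0" by (simp add: algebra_simps)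
  then show ?thesis using g by simp
qed

lemma sum_characters_nonzero:
  fixes y :: "'a::ab_group_add"
  assumes fin: "finite (UNIV :: 'a set)" and y: "y \<noteq> 0"
  shows "(\<Sum>\<xi>\<in>characters. \<xi> y) = 0"
proof -
  obtain \<xi>0 where \<xi>0: "additive_char \<xi>0" "\<xi>0 y \<noteq> 1"
    using additive_char_separates[OF fin y] by blast
  have cancel: "\<xi>0 x * (\<xi>0 (- x) * z) = z" "\<xi>0 (- x) * (\<xi>0 x * z) = z" for x z
  proof -
    have "\<xi>0 x * \<xi>0 (- x) = 1" by (rule additive_char_neg[OF \<xi>0(1)])
    then show "\<xi>0 x * (\<xi>0 (- x) * z) = z" by (simp only: mult.assoc[symmetric] mult_1_left)
    then show "\<xi>0 (- x) * (\<xi>0 x * z) = z" by (simp only: mult.left_commute[of "\<xi>0 (- x)"])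
  qed
  have "(\<Sum>\<xi>\<in>characters. \<xi> y) = (\<Sum>\<xi>\<in>characters. \<xi>0 y * \<xi> y)"
    by (rule sum.reindex_bij_witness[of _ "\<lambda>\<xi> x. \<xi>0 x * \<xi> x" "\<lambda>\<xi> x. \<xi>0 (- x) * \<xi> x"])
      (auto simp: characters_def \<xi>0(1) additive_char_mult additive_char_uminus cancel)
  also have "\<dots> = \<xi>0 y * (\<Sum>\<xi>\<in>characters. \<xi> y)" by (simp add: sum_distrib_left)
  finally have "(1 - \<xi>0 y) * (\<Sum>\<xi>\<in>characters. \<xi> y) = 0" by (simp add: algebra_simps)
  then show ?thesis using \<xi>0(2) by simp
qed

lemma card_characters:
  assumes fin: "finite (UNIV :: 'a::ab_group_add set)"
  shows "card (characters :: ('a \<Rightarrow> complex) set) = CARD('a)"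
proof -
  have one: "(\<lambda>_. 1) \<in> (characters :: ('a \<Rightarrow> complex) set)"
    by (simp add: characters_def char_on_def)
  have "of_nat (card (characters :: ('a \<Rightarrow> complex) set)) = (\<Sum>\<xi>\<in>characters. \<xi> (0::'a))"
    by (simp add: characters_def additive_char_zero)
  also have "\<dots> = (\<Sum>y\<in>(UNIV :: 'a set). if y = 0 then \<Sum>\<xi>\<in>characters. \<xi> y else 0)"
    using fin by simp
  also have "\<dots> = (\<Sum>y\<in>(UNIV :: 'a set). \<Sum>\<xi>\<in>characters. \<xi> y)"
    using sum_characters_nonzero[OF fin] by (intro sum.cong) auto
  also have "\<dots> = (\<Sum>\<xi>\<in>characters. \<Sum>y\<in>(UNIV :: 'a set). \<xi> y)"
    by (rule sum.swap)
  also have "\<dots> = (\<Sum>\<xi>\<in>characters. if \<xi> = (\<lambda>_::'a. 1) then of_nat (CARD('a)) else 0)"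
    using sum_additive_char_nontrivial[OF fin] by (intro sum.cong) (auto simp: characters_def fun_eq_iff)
  also have "\<dots> = of_nat (CARD('a))"
    using finite_characters[OF fin] one by simp
  finally show ?thesis by (simp only: of_nat_eq_iff)
qed

lemma sum_characters:
  fixes y :: "'a::ab_group_add"
  assumes "finite (UNIV :: 'a set)"
  shows "(\<Sum>\<xi>\<in>characters. \<xi> y) = (if y = 0 then of_nat (CARD('a)) else 0)"
  using sum_characters_nonzero[OF assms] card_characters[OF assms]
  by (simp add: characters_def additive_char_zero)

section \<open>Roots of unity\<close>

lemma norm_one_minus_sq:
  assumes "norm (w::complex) = 1"
  shows "(norm (1 - w))\<^sup>2 = 2 - 2 * Re w"
proof -
  have "(Re w)\<^sup>2 + (Im w)\<^sup>2 = 1" using assms by (simp flip: cmod_power2)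
  moreover have "(norm (1 - w))\<^sup>2 = (1 - Re w)\<^sup>2 + (Im w)\<^sup>2" by (simp add: cmod_power2)
  ultimately show ?thesis by (simp add: power2_eq_square algebra_simps)
qed

lemma norm_one_minus_power_le:
  assumes "norm (z::complex) = 1"
  shows "norm (1 - z ^ j) \<le> real j * norm (1 - z)"
proof (induction j)
  case (Suc j)
  have "1 - z ^ Suc j = (1 - z ^ j) + z ^ j * (1 - z)" by (simp add: algebra_simps)
  then have "norm (1 - z ^ Suc j) \<le> norm (1 - z ^ j) + norm (z ^ j * (1 - z))"
    by (metis norm_triangle_ineq)
  also have "norm (z ^ j * (1 - z)) = norm (1 - z)" using assms by (simp add: norm_mult norm_power)
  finally show ?case using Suc.IH by (simp add: algebra_simps)
qed simp

lemma sum_squares_le_cube: "(\<Sum>j<d. (real j)\<^sup>2) \<le> (real d) ^ 3 / 3"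
proof (induction d)
  case (Suc d)
  then have "(\<Sum>j<Suc d. (real j)\<^sup>2) \<le> (real d) ^ 3 / 3 + (real d)\<^sup>2" by simp
  also have "\<dots> \<le> (real (Suc d)) ^ 3 / 3" by (simp add: power2_eq_square power3_eq_cube algebra_simps)
  finally show ?case .
qed simp

text \<open>The powers z ^ j, j < d, sum to 0, while 1 - Re (z ^ j) \<le> j ^ 2 (1 - Re z).\<close>

lemma root_of_unity_Re_gap:
  assumes z: "(z::complex) ^ d = 1" "z \<noteq> 1" and d: "0 < d"
  shows "3 / (real d)\<^sup>2 \<le> 1 - Re z"
proof -
  have nz: "norm z = 1" using power_eq_1_iff[OF z(1)] d by simp
  have term_le: "1 - Re (z ^ j) \<le> (real j)\<^sup>2 * (1 - Re z)" for j
  proof -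
    have "(norm (1 - z ^ j))\<^sup>2 \<le> (real j * norm (1 - z))\<^sup>2"
      by (intro power_mono norm_one_minus_power_le[OF nz]) simp
    moreover have "(real j * norm (1 - z))\<^sup>2 = 2 * ((real j)\<^sup>2 * (1 - Re z))"
      by (simp add: power_mult_distrib norm_one_minus_sq[OF nz] algebra_simps)
    ultimately show ?thesis
      using norm_one_minus_sq[of "z ^ j"] nz by (simp add: norm_power)
  qed
  have "(\<Sum>j<d. z ^ j) = 0" using geometric_sum[OF z(2), of d] z(1) by simp
  then have "real d = (\<Sum>j<d. 1 - Re (z ^ j))"
    by (simp add: sum_subtractf flip: Re_sum)
  also have "\<dots> \<le> (\<Sum>j<d. (real j)\<^sup>2) * (1 - Re z)"
    by (simp add: sum_distrib_right term_le sum_mono)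
  also have "\<dots> \<le> (real d) ^ 3 / 3 * (1 - Re z)"
    using complex_Re_le_cmod[of z] nz by (intro mult_right_mono sum_squares_le_cube) simp
  finally have "real d * 3 \<le> real d * ((real d)\<^sup>2 * (1 - Re z))"
    by (simp add: power2_eq_square power3_eq_cube algebra_simps)
  then have "3 \<le> (real d)\<^sup>2 * (1 - Re z)"
    using d by (simp add: mult_le_cancel_left_pos)
  then show ?thesis using d by (simp add: divide_le_eq mult.commute)
qed

lemma additive_char_Re_le:
  fixes \<xi> :: "'a::ab_group_add \<Rightarrow> complex"
  assumes fin: "finite (UNIV :: 'a set)" and \<xi>: "additive_char \<xi>" and u: "\<xi> u \<noteq> 1"
  shows "Re (\<xi> u) \<le> 1 - 2 / (real (CARD('a)))\<^sup>2"
proof -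
  obtain d where d: "0 < d" "d \<le> CARD('a)" "\<xi> u ^ d = 1"
    using char_on_root_of_unity[OF fin add_subgroup_UNIV \<xi>] by blast
  have "2 / (real (CARD('a)))\<^sup>2 \<le> 3 / (real d)\<^sup>2"
    using d by (intro frac_le power_mono) auto
  then show ?thesis using root_of_unity_Re_gap[OF d(3) u d(1)] by linarith
qed

section \<open>Fourier coefficients of balanced distributions\<close>

definition balanced_distr :: "real \<Rightarrow> ('r::comm_ring_1 \<Rightarrow> real) \<Rightarrow> bool" where
  "balanced_distr \<epsilon> p \<longleftrightarrow> (\<forall>r. 0 \<le> p r) \<and> (\<Sum>r\<in>UNIV. p r) = 1 \<and>
     (\<forall>I q S. elem_abelian_quot I q \<and> proper_affine_preimage I S \<longrightarrow> (\<Sum>r\<in>S. p r) \<le> 1 - \<epsilon>)"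

lemma elem_abelian_quot_char_annihilator:
  fixes \<psi> :: "'r::comm_ring_1 \<Rightarrow> complex"
  assumes \<psi>: "additive_char \<psi>" and p: "prime p"
    and qp: "\<And>t. \<psi> (of_nat (q * p) * t) = 1" and t1: "\<psi> (of_nat q * t1) \<noteq> 1"
  shows "elem_abelian_quot {t. \<forall>s. \<psi> (of_nat q * (s * t)) = 1} p"
proof -
  let ?I = "{t. \<forall>s. \<psi> (of_nat q * (s * t)) = 1}"
  have "is_ideal ?I"
    unfolding is_ideal_def
  proof (intro conjI ballI allI)
    fix x y assume "x \<in> ?I" "y \<in> ?I"
    then show "x + y \<in> ?I" by (simp add: distrib_left additive_char_add[OF \<psi>])
  next
    fix r x assume "x \<in> ?I"
    then have "\<psi> (of_nat q * ((s * r) * x)) = 1" for s by blast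
    then show "r * x \<in> ?I" by (simp add: mult.assoc)
  qed (simp add: additive_char_zero[OF \<psi>])
  moreover have "1 \<notin> ?I" using t1 by (auto dest: spec[of _ t1])
  moreover have "of_nat p \<in> ?I"
  proof (rule CollectI, rule allI)
    fix s :: 'r
    have "of_nat q * (s * of_nat p) = of_nat (q * p) * s" by (simp add: algebra_simps)
    then show "\<psi> (of_nat q * (s * of_nat p)) = 1" using qp by (simp only:)
  qed
  ultimately show ?thesis using p unfolding elem_abelian_quot_def by blast
qed

text \<open>If m is the additive order of \<psi> and p a prime factor of m, take
  K = {t. \<psi> ((m/p) t) = 1} and for I the largest ideal contained in K.\<close>

lemma additive_char_kernel_subgroup:
  fixes \<psi> :: "'r::comm_ring_1 \<Rightarrow> complex"
  assumes fin: "finite (UNIV :: 'r set)" and \<psi>: "additive_char \<psi>" and t0: "\<psi> t0 \<noteq> 1"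
  obtains I p K where "elem_abelian_quot I p" "add_subgroup K" "I \<subseteq> K" "K \<noteq> UNIV"
    "\<And>u. \<psi> u = 1 \<Longrightarrow> u \<in> K"
proof -
  define P where "P m \<longleftrightarrow> 0 < m \<and> (\<forall>t. \<psi> (of_nat m * t) = 1)" for m
  obtain c where "0 < c" "nat_mult c (1::'r) = 0" using ex_nat_mult_eq_0[OF fin] by blast
  then have "P c" by (simp add: P_def nat_mult_eq_of_nat_mult additive_char_zero[OF \<psi>])
  then obtain m where m: "P m" and least: "\<And>j. j < m \<Longrightarrow> \<not> P j"
    using exists_least_iff[of P] by blast
  have "m \<noteq> 1" using m t0 by (auto simp: P_def dest: spec[of _ t0])
  then obtain p where p: "prime p" "p dvd m" using prime_factor_nat by blast
  then obtain q where q: "m = q * p" by (auto elim: dvdE simp: mult.commute)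
  have "0 < q" "q < m" using m q prime_gt_1_nat[OF p(1)] by (auto simp: P_def)
  then obtain t1 where t1: "\<psi> (of_nat q * t1) \<noteq> 1" using least by (auto simp: P_def)
  define K where "K = {t. \<psi> (of_nat q * t) = 1}"
  have "elem_abelian_quot {t. \<forall>s. \<psi> (of_nat q * (s * t)) = 1} p"
    using elem_abelian_quot_char_annihilator[OF \<psi> p(1) _ t1] m q by (simp add: P_def)
  moreover have "add_subgroup K"
  proof -
    have "\<psi> (- (of_nat q * x)) = 1" if "\<psi> (of_nat q * x) = 1" for x
      using additive_char_neg[OF \<psi>, of "of_nat q * x"] that by simp
    then show ?thesis
      by (auto simp: K_def add_subgroup_def distrib_left additive_char_add[OF \<psi>]
          additive_char_zero[OF \<psi>])
  qed
  moreover have "{t. \<forall>s. \<psi> (of_nat q * (s * t)) = 1} \<subseteq> K" by (auto simp: K_def dest: spec[of _ 1])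
  moreover have "K \<noteq> UNIV" using t1 by (auto simp: K_def)
  moreover have "u \<in> K" if "\<psi> u = 1" for u
    using that by (simp add: K_def additive_char_of_nat_mult[OF \<psi>])
  ultimately show ?thesis using that by blast
qed

lemma proper_affine_preimage_coset:
  assumes "add_subgroup K" "I \<subseteq> K" "K \<noteq> UNIV"
  shows "proper_affine_preimage I {r. r - s \<in> K}"
proof -
  have "{r. r - s \<in> K} = (\<lambda>h. s + h) ` K"
  proof (intro set_eqI iffI)
    fix r assume "r \<in> {r. r - s \<in> K}"
    then show "r \<in> (\<lambda>h. s + h) ` K" by (intro image_eqI[of _ _ "r - s"]) auto
  qed auto
  then show ?thesis
    using assms unfolding proper_affine_preimage_def add_subgroup_def
    by (intro exI[of _ s] exI[of _ K]) blast
qed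

lemma cnj_additive_char:
  fixes \<xi> :: "'a::ab_group_add \<Rightarrow> complex"
  assumes fin: "finite (UNIV :: 'a set)" and \<xi>: "additive_char \<xi>"
  shows "cnj (\<xi> x) = \<xi> (- x)"
proof -
  have norm1: "norm (\<xi> x) = 1" using norm_char_on[OF fin add_subgroup_UNIV \<xi>] by simp
  then have "\<xi> x * cnj (\<xi> x) = \<xi> x * \<xi> (- x)"
    using additive_char_neg[OF \<xi>, of x] by (simp flip: complex_norm_square)
  moreover have "\<xi> x \<noteq> 0" using norm1 by auto
  ultimately show ?thesis by simp
qed

lemma norm_char_mean_le_one:
  fixes \<xi> :: "'a::ab_group_add \<Rightarrow> complex"
  assumes fin: "finite (UNIV :: 'a set)" and \<xi>: "additive_char \<xi>"
    and p0: "\<And>r. 0 \<le> p r" and p1: "(\<Sum>r\<in>UNIV. p r) = 1"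
  shows "norm (\<Sum>r\<in>UNIV. complex_of_real (p r) * \<xi> r) \<le> 1"
proof -
  have "norm (\<Sum>r\<in>UNIV. complex_of_real (p r) * \<xi> r) \<le> (\<Sum>r\<in>UNIV. p r)"
    using norm_sum[of "\<lambda>r. complex_of_real (p r) * \<xi> r" UNIV]
    by (simp add: norm_mult p0 norm_char_on[OF fin add_subgroup_UNIV \<xi>])
  then show ?thesis using p1 by simp
qed

lemma norm_char_mean_sq_eq:
  fixes \<xi> :: "'a::ab_group_add \<Rightarrow> complex" and p :: "'a \<Rightarrow> real"
  assumes fin: "finite (UNIV :: 'a set)" and \<xi>: "additive_char \<xi>"
  shows "(norm (\<Sum>r\<in>UNIV. complex_of_real (p r) * \<xi> r))\<^sup>2
           = (\<Sum>r\<in>UNIV. \<Sum>s\<in>UNIV. p r * p s * Re (\<xi> (r - s)))"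
proof -
  define \<phi> where "\<phi> = (\<Sum>r\<in>UNIV. complex_of_real (p r) * \<xi> r)"
  have "\<phi> * cnj \<phi> = (\<Sum>r\<in>UNIV. \<Sum>s\<in>UNIV. complex_of_real (p r * p s) * \<xi> (r - s))"
    unfolding \<phi>_def cnj_sum sum_product
  proof (intro sum.cong refl)
    fix r s
    show "complex_of_real (p r) * \<xi> r * cnj (complex_of_real (p s) * \<xi> s)
        = complex_of_real (p r * p s) * \<xi> (r - s)"
      using additive_char_add[OF \<xi>, of r "- s"] cnj_additive_char[OF fin \<xi>, of s]
      by (simp add: mult_ac)
  qed
  moreover have "(norm \<phi>)\<^sup>2 = Re (\<phi> * cnj \<phi>)" by (simp flip: complex_norm_square)
  ultimately show ?thesis unfolding \<phi>_def by simp
qed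

lemma norm_char_mean_sq_le:
  fixes \<xi> :: "'a::ab_group_add \<Rightarrow> complex" and p :: "'a \<Rightarrow> real"
  assumes fin: "finite (UNIV :: 'a set)" and \<xi>: "additive_char \<xi>"
    and p0: "\<And>r. 0 \<le> p r" and p1: "(\<Sum>r\<in>UNIV. p r) = 1"
    and gap: "\<And>u. u \<notin> K \<Longrightarrow> Re (\<xi> u) \<le> 1 - \<gamma>"
    and spread: "\<And>s. \<epsilon> \<le> (\<Sum>r | r - s \<notin> K. p r)" and \<gamma>: "0 \<le> \<gamma>"
  shows "(norm (\<Sum>r\<in>UNIV. complex_of_real (p r) * \<xi> r))\<^sup>2 \<le> 1 - \<gamma> * \<epsilon>"
proof -
  define b where "b u = (if u \<in> K then 1 else 1 - \<gamma>)" for u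
  have Re_le: "Re (\<xi> u) \<le> b u" for u
    using gap[of u] complex_Re_le_cmod[of "\<xi> u"] norm_char_on[OF fin add_subgroup_UNIV \<xi>]
    by (auto simp: b_def)
  have "(norm (\<Sum>r\<in>UNIV. complex_of_real (p r) * \<xi> r))\<^sup>2
      = (\<Sum>r\<in>UNIV. \<Sum>s\<in>UNIV. p r * p s * Re (\<xi> (r - s)))"
    by (rule norm_char_mean_sq_eq[OF fin \<xi>])
  also have "\<dots> \<le> (\<Sum>r\<in>UNIV. \<Sum>s\<in>UNIV. p r * p s * b (r - s))"
    by (intro sum_mono mult_left_mono Re_le) (simp add: p0)
  also have "\<dots> = (\<Sum>s\<in>UNIV. p s * (\<Sum>r\<in>UNIV. p r * b (r - s)))"
    by (subst sum.swap) (simp add: sum_distrib_left mult_ac)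
  also have "\<dots> \<le> (\<Sum>s\<in>UNIV. p s * (1 - \<gamma> * \<epsilon>))"
  proof (intro sum_mono mult_left_mono)
    fix s
    have "p r * b (r - s) = p r - \<gamma> * (if r - s \<in> K then 0 else p r)" for r
      by (simp add: b_def algebra_simps)
    moreover have "(\<Sum>r\<in>UNIV. if r - s \<in> K then 0 else p r) = (\<Sum>r | r - s \<notin> K. p r)"
      by (rule sum.mono_neutral_cong_right[OF fin]) auto
    ultimately have "(\<Sum>r\<in>UNIV. p r * b (r - s)) = 1 - \<gamma> * (\<Sum>r | r - s \<notin> K. p r)"
      by (simp add: sum_subtractf p1 flip: sum_distrib_left)
    then show "(\<Sum>r\<in>UNIV. p r * b (r - s)) \<le> 1 - \<gamma> * \<epsilon>"
      using spread[of s] \<gamma> by (simp add: mult_left_mono)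
  qed (simp add: p0)
  also have "\<dots> = 1 - \<gamma> * \<epsilon>" by (simp add: p1 flip: sum_distrib_right)
  finally show ?thesis .
qed

lemma norm_char_mean_le_exp:
  fixes \<psi> :: "'r::comm_ring_1 \<Rightarrow> complex"
  assumes fin: "finite (UNIV :: 'r set)" and \<psi>: "additive_char \<psi>" and t0: "\<psi> t0 \<noteq> 1"
    and p: "balanced_distr \<epsilon> p"
  shows "norm (\<Sum>r\<in>UNIV. complex_of_real (p r) * \<psi> r) \<le> exp (- \<epsilon> / (real (CARD('r)))\<^sup>2)"
proof -
  define \<gamma> where "\<gamma> = 2 / (real (CARD('r)))\<^sup>2"
  obtain I q K where IK: "elem_abelian_quot I q" "add_subgroup K" "I \<subseteq> K" "K \<noteq> UNIV"
    and ker: "\<And>u. \<psi> u = 1 \<Longrightarrow> u \<in> K"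
    using additive_char_kernel_subgroup[OF fin \<psi> t0] by blast
  have p0: "\<And>r. 0 \<le> p r" and p1: "(\<Sum>r\<in>UNIV. p r) = 1"
    using p by (simp_all add: balanced_distr_def)
  have "\<epsilon> \<le> (\<Sum>r | r - s \<notin> K. p r)" for s
  proof -
    have "(\<Sum>r | r - s \<in> K. p r) \<le> 1 - \<epsilon>"
      using p IK(1) proper_affine_preimage_coset[OF IK(2-4), of s]
      unfolding balanced_distr_def by blast
    moreover have "(\<Sum>r | r - s \<in> K. p r) + (\<Sum>r | r - s \<notin> K. p r) = 1"
    proof -
      have "{r. r - s \<in> K} \<union> {r. r - s \<notin> K} = UNIV" by blast
      then show ?thesis
        using p1 sum.union_disjoint[of "{r. r - s \<in> K}" "{r. r - s \<notin> K}" p]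
          finite_subset[OF subset_UNIV fin]
        by (simp add: disjoint_iff)
    qed
    ultimately show ?thesis by linarith
  qed
  moreover have "Re (\<psi> u) \<le> 1 - \<gamma>" if "u \<notin> K" for u
    using additive_char_Re_le[OF fin \<psi>] ker that unfolding \<gamma>_def by blast
  ultimately have "(norm (\<Sum>r\<in>UNIV. complex_of_real (p r) * \<psi> r))\<^sup>2 \<le> 1 - \<gamma> * \<epsilon>"
    by (intro norm_char_mean_sq_le[OF fin \<psi> p0 p1]) (simp_all add: \<gamma>_def)
  also have "\<dots> \<le> exp (- \<gamma> * \<epsilon>)" using exp_ge_add_one_self[of "- \<gamma> * \<epsilon>"] by simp
  also have "\<dots> = (exp (- \<epsilon> / (real (CARD('r)))\<^sup>2))\<^sup>2"
    by (simp add: \<gamma>_def power2_eq_square flip: exp_add)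
  finally show ?thesis by (rule power2_le_imp_le) simp
qed

section \<open>Codes and characters\<close>

definition std_basis :: "'k \<Rightarrow> 'k \<Rightarrow> 'r::zero_neq_one" where
  "std_basis i = (\<lambda>j. if j = i then 1 else 0)"

lemma sum_fun_apply: "(\<Sum>i\<in>A. f i) x = (\<Sum>i\<in>A. f i x)"
  by (induction A rule: infinite_finite_induct) auto

lemma module_hom_eq_sum_std_basis:
  fixes F :: "('k::finite \<Rightarrow> 'r::comm_ring_1) \<Rightarrow> 'n::ab_group_add"
    and scale :: "'r \<Rightarrow> 'n \<Rightarrow> 'n"
  assumes hom: "module_hom (\<lambda>r x i. r * x i) scale F"
  shows "F x = (\<Sum>i\<in>UNIV. scale (x i) (F (std_basis i)))"
proof -
  have "(\<Sum>i\<in>UNIV. x i * std_basis i j) = (\<Sum>i\<in>UNIV. if j = i then x i else 0)" for j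
    by (intro sum.cong) (auto simp: std_basis_def)
  then have "x = (\<Sum>i\<in>UNIV. (\<lambda>j. x i * std_basis i j))"
    by (simp add: fun_eq_iff sum_fun_apply)
  then have "F x = (\<Sum>i\<in>UNIV. F (\<lambda>j. x i * std_basis i j))"
    by (metis module_hom.sum[OF hom])
  then show ?thesis by (simp add: module_hom.scale[OF hom, symmetric])
qed

text \<open>For the set \<sigma> of coordinates below, \<xi> \<circ> F is trivial on V_\<sigma>, so F(V_\<sigma>) \<noteq> N.\<close>

lemma code_char_nontrivial_coordinates:
  fixes F :: "('k::finite \<Rightarrow> 'r::comm_ring_1) \<Rightarrow> 'n::ab_group_add" and \<xi> :: "'n \<Rightarrow> complex"
    and scale :: "'r \<Rightarrow> 'n \<Rightarrow> 'n"
  assumes hom: "module_hom (\<lambda>r x i. r * x i) scale F" and code: "is_code F w"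
    and \<xi>: "additive_char \<xi>" and y: "\<xi> y \<noteq> 1"
  shows "w \<le> real (card {i. \<exists>r. \<xi> (scale r (F (std_basis i))) \<noteq> 1})"
proof (rule ccontr)
  define g where "g i = F (std_basis i)" for i
  let ?\<sigma> = "{i. \<exists>r. \<xi> (scale r (g i)) \<noteq> 1}"
  assume "\<not> w \<le> real (card {i. \<exists>r. \<xi> (scale r (F (std_basis i))) \<noteq> 1})"
  then have "F ` Vsub ?\<sigma> = UNIV" using code by (simp add: is_code_def g_def)
  then have "y \<in> F ` Vsub ?\<sigma>" by simp
  then obtain x where x: "x \<in> Vsub ?\<sigma>" "F x = y" by blast
  have "\<xi> (scale (x i) (g i)) = 1" for i
  proof (cases "i \<in> ?\<sigma>")
    case True
    then have "x i = 0" using x(1) by (simp add: Vsub_def)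
    then show ?thesis
      using module.scale_zero_left[OF module_hom.axioms(2)[OF hom]] additive_char_zero[OF \<xi>]
      by simp
  next
    case False
    then show ?thesis by simp
  qed
  moreover have "F x = (\<Sum>i\<in>UNIV. scale (x i) (g i))"
    unfolding g_def by (rule module_hom_eq_sum_std_basis[OF hom])
  ultimately have "\<xi> (F x) = 1" by (simp add: additive_char_sum[OF \<xi>])
  then show False using x(2) y by simp
qed

section \<open>Equidistribution from character sums\<close>

lemma card_mul_sum_fiber_eq_sum_characters:
  fixes f :: "'b \<Rightarrow> 'n::{finite, ab_group_add}" and w :: "'b \<Rightarrow> complex"
  assumes S: "finite S"
  shows "of_nat CARD('n) * (\<Sum>x | x \<in> S \<and> f x = A. w x)
           = (\<Sum>\<xi>\<in>characters. \<Sum>x\<in>S. w x * \<xi> (f x - A))"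
proof -
  have "(\<Sum>\<xi>\<in>characters. \<Sum>x\<in>S. w x * \<xi> (f x - A)) = (\<Sum>x\<in>S. w x * (\<Sum>\<xi>\<in>characters. \<xi> (f x - A)))"
    by (subst sum.swap) (simp add: sum_distrib_left)
  also have "\<dots> = (\<Sum>x\<in>S. of_nat CARD('n) * (if f x = A then w x else 0))"
    by (intro sum.cong refl) (simp add: sum_characters)
  also have "\<dots> = of_nat CARD('n) * (\<Sum>x | x \<in> S \<and> f x = A. w x)"
    using S by (simp add: sum.inter_filter flip: sum_distrib_left)
  finally show ?thesis by simp
qed

lemma fiber_weight_deviation_le:
  fixes f :: "'b \<Rightarrow> 'n::{finite, ab_group_add}" and w :: "'b \<Rightarrow> real"
  assumes S: "finite S" and w1: "(\<Sum>x\<in>S. w x) = 1" and B: "0 \<le> B"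
    and bound: "\<And>\<xi>. additive_char \<xi> \<Longrightarrow> \<xi> \<noteq> (\<lambda>_. 1)
                  \<Longrightarrow> norm (\<Sum>x\<in>S. complex_of_real (w x) * \<xi> (f x)) \<le> B"
  shows "\<bar>(\<Sum>x | x \<in> S \<and> f x = A. w x) - 1 / real CARD('n)\<bar> \<le> B"
proof -
  let ?N = "CARD('n)" and ?Q = "\<Sum>x | x \<in> S \<and> f x = A. w x"
  define c where "c \<xi> = (\<Sum>x\<in>S. complex_of_real (w x) * \<xi> (f x - A))" for \<xi> :: "'n \<Rightarrow> complex"
  have one: "(\<lambda>_. 1) \<in> (characters :: ('n \<Rightarrow> complex) set)"
    by (simp add: characters_def char_on_def)
  have c_le: "norm (c \<xi>) \<le> B" if "\<xi> \<in> characters - {\<lambda>_. 1}" for \<xi>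
  proof -
    have \<xi>: "additive_char \<xi>" using that by (simp add: characters_def)
    have "\<xi> (f x - A) = \<xi> (- A) * \<xi> (f x)" for x
      using additive_char_add[OF \<xi>, of "f x" "- A"] by (simp add: mult.commute)
    then have "c \<xi> = \<xi> (- A) * (\<Sum>x\<in>S. complex_of_real (w x) * \<xi> (f x))"
      by (simp add: c_def sum_distrib_left mult_ac)
    then show ?thesis
      using bound[OF \<xi>] that norm_char_on[OF _ add_subgroup_UNIV \<xi>]
      by (simp add: norm_mult)
  qed
  have "of_nat ?N * complex_of_real ?Q = (\<Sum>\<xi>\<in>characters. c \<xi>)"
    using card_mul_sum_fiber_eq_sum_characters[OF S,
        where f = f and A = A and w = "\<lambda>x. complex_of_real (w x)"]
    by (simp add: c_def)
  also have "\<dots> = 1 + (\<Sum>\<xi>\<in>characters - {\<lambda>_. 1}. c \<xi>)"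
    using sum.remove[OF finite_characters one, of c] w1 by (simp add: c_def flip: of_real_sum)
  finally have "(\<Sum>\<xi>\<in>characters - {\<lambda>_. 1}. c \<xi>) = complex_of_real (real ?N * ?Q - 1)"
    by simp
  moreover have "norm (\<Sum>\<xi>\<in>characters - {\<lambda>_. 1}. c \<xi>)
      \<le> (\<Sum>\<xi>\<in>(characters :: ('n \<Rightarrow> complex) set) - {\<lambda>_. 1}. B)"
    by (rule sum_norm_le) (rule c_le)
  moreover have "(\<Sum>\<xi>\<in>(characters :: ('n \<Rightarrow> complex) set) - {\<lambda>_. 1}. B) = real (?N - 1) * B"
    by (simp add: card_Diff_singleton[OF one] card_characters)
  ultimately have "\<bar>real ?N * ?Q - 1\<bar> \<le> real (?N - 1) * B"
    by (simp only: norm_of_real)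
  also have "\<dots> \<le> real ?N * B" using B by (intro mult_right_mono) auto
  finally show ?thesis
    by (simp add: abs_le_iff field_simps)
qed

lemma sum_prod_weights_additive_char:
  fixes p :: "'k::finite \<Rightarrow> 'r \<Rightarrow> real" and h :: "'k \<Rightarrow> 'r \<Rightarrow> 'n::ab_group_add"
  assumes fin: "finite (UNIV :: 'r set)" and \<xi>: "additive_char \<xi>"
  shows "(\<Sum>x\<in>UNIV. (\<Prod>i\<in>UNIV. complex_of_real (p i (x i))) * \<xi> (\<Sum>i\<in>UNIV. h i (x i)))
           = (\<Prod>i\<in>UNIV. \<Sum>r\<in>UNIV. complex_of_real (p i r) * \<xi> (h i r))"
  using prod_sum_PiE[of "UNIV :: 'k set" "\<lambda>_. UNIV :: 'r set"
      "\<lambda>i r. complex_of_real (p i r) * \<xi> (h i r)"] fin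
  by (simp add: additive_char_sum[OF \<xi>] prod.distrib)

lemma sum_prod_weights:
  fixes p :: "'k::finite \<Rightarrow> 'r \<Rightarrow> real"
  assumes "finite (UNIV :: 'r set)"
  shows "(\<Sum>x\<in>UNIV. \<Prod>i\<in>UNIV. p i (x i)) = (\<Prod>i\<in>UNIV. \<Sum>r\<in>UNIV. p i r)"
  using prod_sum_PiE[of "UNIV :: 'k set" "\<lambda>_. UNIV :: 'r set" p] assms by simp

lemma code_char_sum_le:
  fixes p :: "'k::finite \<Rightarrow> 'r::comm_ring_1 \<Rightarrow> real"
    and F :: "('k \<Rightarrow> 'r) \<Rightarrow> 'n::ab_group_add" and scale :: "'r \<Rightarrow> 'n \<Rightarrow> 'n"
  assumes fin: "finite (UNIV :: 'r set)" and hom: "module_hom (\<lambda>r x i. r * x i) scale F"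
    and code: "is_code F w" and p: "\<And>i. balanced_distr \<epsilon> (p i)" and \<epsilon>: "0 \<le> \<epsilon>"
    and \<xi>: "additive_char \<xi>" and nontriv: "\<xi> \<noteq> (\<lambda>_. 1)"
  shows "norm (\<Sum>x\<in>UNIV. complex_of_real (\<Prod>i\<in>UNIV. p i (x i)) * \<xi> (F x))
           \<le> exp (- \<epsilon> * w / (real CARD('r))\<^sup>2)"
proof -
  define b where "b = exp (- \<epsilon> / (real CARD('r))\<^sup>2)"
  define g where "g i = F (std_basis i)" for i
  let ?\<psi> = "\<lambda>i r. \<xi> (scale r (g i))"
  let ?\<sigma> = "{i. \<exists>r. ?\<psi> i r \<noteq> 1}"
  have p0: "\<And>i r. 0 \<le> p i r" and p1: "\<And>i. (\<Sum>r\<in>UNIV. p i r) = 1"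
    using p by (simp_all add: balanced_distr_def)
  have F_eq: "F x = (\<Sum>i\<in>UNIV. scale (x i) (g i))" for x
    unfolding g_def by (rule module_hom_eq_sum_std_basis[OF hom])
  have \<psi>: "additive_char (?\<psi> i)" for i
    using \<xi> module.scale_left_distrib[OF module_hom.axioms(2)[OF hom]]
      module.scale_zero_left[OF module_hom.axioms(2)[OF hom]]
    by (simp add: char_on_def)
  have "norm (\<Sum>x\<in>UNIV. complex_of_real (\<Prod>i\<in>UNIV. p i (x i)) * \<xi> (F x))
      = (\<Prod>i\<in>UNIV. norm (\<Sum>r\<in>UNIV. complex_of_real (p i r) * ?\<psi> i r))"
    by (simp add: F_eq prod_norm
        sum_prod_weights_additive_char[OF fin \<xi>, where p = p and h = "\<lambda>i r. scale r (g i)"])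
  also have "\<dots> \<le> (\<Prod>i\<in>UNIV. if i \<in> ?\<sigma> then b else 1)"
  proof (intro prod_mono conjI norm_ge_zero)
    fix i
    show "norm (\<Sum>r\<in>UNIV. complex_of_real (p i r) * ?\<psi> i r) \<le> (if i \<in> ?\<sigma> then b else 1)"
    proof (cases "i \<in> ?\<sigma>")
      case True
      then obtain t where "?\<psi> i t \<noteq> 1" by blast
      from norm_char_mean_le_exp[OF fin \<psi> this p] True show ?thesis by (simp add: b_def)
    next
      case False
      from norm_char_mean_le_one[OF fin \<psi> p0 p1, of i] show ?thesis
        by (simp only: if_not_P[OF False])
    qed
  qed
  also have "\<dots> = exp (- \<epsilon> * real (card ?\<sigma>) / (real CARD('r))\<^sup>2)"
    by (simp add: prod.If_cases Int_def b_def flip: exp_of_nat_mult)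
  also have "\<dots> \<le> exp (- \<epsilon> * w / (real CARD('r))\<^sup>2)"
  proof -
    obtain y where "\<xi> y \<noteq> 1" using nontriv by auto
    then have "w \<le> real (card ?\<sigma>)"
      unfolding g_def by (rule code_char_nontrivial_coordinates[OF hom code \<xi>])
    then show ?thesis using \<epsilon> by (intro exp_mono divide_right_mono) (simp_all add: mult_left_mono)
  qed
  finally show ?thesis .
qed

lemma code_equidistribution:
  fixes p :: "'k::finite \<Rightarrow> 'r::comm_ring_1 \<Rightarrow> real"
    and F :: "('k \<Rightarrow> 'r) \<Rightarrow> 'n::{finite, ab_group_add}" and scale :: "'r \<Rightarrow> 'n \<Rightarrow> 'n"
  assumes fin: "finite (UNIV :: 'r set)" and hom: "module_hom (\<lambda>r x i. r * x i) scale F"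
    and code: "is_code F w" and p: "\<And>i. balanced_distr \<epsilon> (p i)" and \<epsilon>: "0 \<le> \<epsilon>"
  shows "\<bar>(\<Sum>x | F x = A. \<Prod>i\<in>UNIV. p i (x i)) - 1 / real CARD('n)\<bar>
           \<le> exp (- \<epsilon> * w / (real CARD('r))\<^sup>2)"
proof -
  have "(\<Sum>x\<in>UNIV. \<Prod>i\<in>UNIV. p i (x i)) = 1"
    using p by (simp add: sum_prod_weights[OF fin] balanced_distr_def)
  moreover have "finite (UNIV :: ('k \<Rightarrow> 'r) set)"
    using finite_PiE[of "UNIV :: 'k set" "\<lambda>_. UNIV :: 'r set"] fin by simp
  ultimately have "\<bar>(\<Sum>x | x \<in> UNIV \<and> F x = A. \<Prod>i\<in>UNIV. p i (x i)) - 1 / real CARD('n)\<bar>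
      \<le> exp (- \<epsilon> * w / (real CARD('r))\<^sup>2)"
    by (intro fiber_weight_deviation_le code_char_sum_le[OF fin hom code p \<epsilon>]) simp_all
  then show ?thesis by simp
qed

lemma is_ideal_multiples: "is_ideal {x::'a::comm_ring_1. a dvd x}"
  by (simp add: is_ideal_def)

lemma finite_range_if_finite_quotient:
  assumes "finite_quotient J" "0 \<in> J" and const: "\<And>x y. x - y \<in> J \<Longrightarrow> \<pi> x = \<pi> y"
  shows "finite (range \<pi>)"
proof -
  let ?cosets = "(\<lambda>x. {y. x - y \<in> J}) ` UNIV"
  have "\<pi> x \<in> (\<lambda>C. \<pi> (SOME y. y \<in> C)) ` ?cosets" for x
  proof -
    have "x \<in> {y. x - y \<in> J}" using assms(2) by simp
    then have "x - (SOME y. y \<in> {y. x - y \<in> J}) \<in> J" by (rule someI2) simp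
    then have "\<pi> x = \<pi> (SOME y. y \<in> {y. x - y \<in> J})" by (rule const)
    then show ?thesis by blast
  qed
  then have "range \<pi> \<subseteq> (\<lambda>C. \<pi> (SOME y. y \<in> C)) ` ?cosets" by blast
  moreover have "finite ((\<lambda>C. \<pi> (SOME y. y \<in> C)) ` ?cosets)"
    using assms(1) unfolding finite_quotient_def by (rule finite_imageI)
  ultimately show ?thesis by (rule finite_subset)
qed

lemma finite_ring_if_finite_quotient:
  fixes a :: "'t::comm_ring_1" and \<pi> :: "'t \<Rightarrow> 'r::monoid_add"
  assumes "finite_quotient {x. a dvd x}" and add: "\<And>x y. \<pi> (x + y) = \<pi> x + \<pi> y"
    and "surj \<pi>" and ker: "\<And>x. \<pi> x = 0 \<longleftrightarrow> a dvd x"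
  shows "finite (UNIV :: 'r set)"
proof -
  have "\<pi> x = \<pi> y" if "x - y \<in> {x. a dvd x}" for x y
    using that add[of "x - y" y] ker[of "x - y"] by simp
  then have "finite (range \<pi>)" by (intro finite_range_if_finite_quotient[OF assms(1)]) simp_all
  then show ?thesis using \<open>surj \<pi>\<close> by simp
qed

lemma (in prob_space) prob_eq_sum_points:
  assumes "finite S" and "\<And>s. s \<in> S \<Longrightarrow> {\<omega> \<in> space M. Y \<omega> = s} \<in> events"
  shows "prob {\<omega> \<in> space M. Y \<omega> \<in> S} = (\<Sum>s\<in>S. prob {\<omega> \<in> space M. Y \<omega> = s})"
proof -
  have "{\<omega> \<in> space M. Y \<omega> \<in> S} = (\<Union>s\<in>S. {\<omega> \<in> space M. Y \<omega> = s})" by auto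
  moreover have "prob (\<Union>s\<in>S. {\<omega> \<in> space M. Y \<omega> = s}) = (\<Sum>s\<in>S. prob {\<omega> \<in> space M. Y \<omega> = s})"
    using assms by (intro finite_measure_finite_Union) (auto simp: disjoint_family_on_def)
  ultimately show ?thesis by simp
qed

lemma (in prob_space) balanced_rv_distr:
  fixes Y :: "'a \<Rightarrow> 'r::comm_ring_1"
  assumes fin: "finite (UNIV :: 'r set)" and Y: "balanced_rv M \<epsilon> Y"
  shows "balanced_distr \<epsilon> (\<lambda>r. prob {\<omega> \<in> space M. Y \<omega> = r})"
proof -
  have "Y \<in> measurable M (count_space UNIV)" using Y by (simp add: balanced_rv_def)
  then have "{\<omega> \<in> space M. Y \<omega> = r} \<in> events" for r
    using measurable_sets[of Y M "count_space UNIV" "{r}"] by (simp add: vimage_def Int_def conj_commute)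
  then have sum_eq: "(\<Sum>r\<in>S. prob {\<omega> \<in> space M. Y \<omega> = r}) = prob {\<omega> \<in> space M. Y \<omega> \<in> S}" for S
    using prob_eq_sum_points[OF finite_subset[OF subset_UNIV fin]] by simp
  show ?thesis
    using Y prob_space by (simp add: balanced_distr_def balanced_rv_def sum_eq)
qed

lemma (in prob_space) prob_indep_vector_in:
  fixes X :: "'k::finite \<Rightarrow> 'a \<Rightarrow> 'r"
  assumes fin: "finite (UNIV :: 'r set)" and indep: "indep_vars (\<lambda>_. count_space UNIV) X UNIV"
  shows "prob {\<omega> \<in> space M. (\<lambda>i. X i \<omega>) \<in> S} = (\<Sum>x\<in>S. \<Prod>i\<in>UNIV. prob {\<omega> \<in> space M. X i \<omega> = x i})"
proof -
  have point: "{\<omega> \<in> space M. (\<lambda>i. X i \<omega>) = x} = (\<Inter>i\<in>UNIV. X i -` {x i} \<inter> space M)" for x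
    by (auto simp: fun_eq_iff)
  have "X i \<in> measurable M (count_space UNIV)" for i
    using indep by (simp add: indep_vars_def)
  then have "{\<omega> \<in> space M. (\<lambda>i. X i \<omega>) = x} \<in> events" for x
    unfolding point by (intro sets.finite_INT) (auto intro: measurable_sets)
  moreover have "finite (UNIV :: ('k \<Rightarrow> 'r) set)"
    using finite_PiE[of "UNIV :: 'k set" "\<lambda>_. UNIV :: 'r set"] fin by simp
  then have "finite S" by (rule finite_subset[OF subset_UNIV])
  ultimately have "prob {\<omega> \<in> space M. (\<lambda>i. X i \<omega>) \<in> S} = (\<Sum>x\<in>S. prob {\<omega> \<in> space M. (\<lambda>i. X i \<omega>) = x})"
    by (intro prob_eq_sum_points)
  also have "\<dots> = (\<Sum>x\<in>S. \<Prod>i\<in>UNIV. prob {\<omega> \<in> space M. X i \<omega> = x i})"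
  proof (intro sum.cong refl)
    fix x :: "'k \<Rightarrow> 'r"
    show "prob {\<omega> \<in> space M. (\<lambda>i. X i \<omega>) = x} = (\<Prod>i\<in>UNIV. prob {\<omega> \<in> space M. X i \<omega> = x i})"
      unfolding point using indep_varsD_finite[OF indep, where A = "\<lambda>i. {x i}"]
      by (simp add: vimage_def Int_def conj_commute)
  qed
  finally show ?thesis .
qed

theorem lemma2p4:
  fixes a :: "'t::idom"
    and \<pi> :: "'t \<Rightarrow> 'r::comm_ring_1"
    and scale :: "'r \<Rightarrow> 'n::{finite, ab_group_add} \<Rightarrow> 'n"
    and M :: "'w measure"
    and X :: "'k::finite \<Rightarrow> 'w \<Rightarrow> 'r"
    and F :: "('k \<Rightarrow> 'r) \<Rightarrow> 'n"
    and A :: 'n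
    and \<delta> \<epsilon> :: real
  assumes "countable (UNIV :: 't set)"
    and "dedekind_domain TYPE('t)"
    and "\<And>J::'t set. is_ideal J \<Longrightarrow> J \<noteq> {0} \<Longrightarrow> finite_quotient J"
    and "a \<noteq> 0" and "\<not> a dvd 1"
    and "\<And>x y. \<pi> (x + y) = \<pi> x + \<pi> y"
    and "\<And>x y. \<pi> (x * y) = \<pi> x * \<pi> y"
    and "\<pi> 1 = 1"
    and "surj \<pi>"
    and "\<And>x. \<pi> x = 0 \<longleftrightarrow> a dvd x"
    and "module scale"
    and "\<delta> > 0" and "\<epsilon> > 0"
    and "prob_space M"
    and "balanced_vec M \<epsilon> X"
    and "module_hom (\<lambda>r x i. r * x i) scale F"
    and "is_code F (\<delta> * real CARD('k))"
  shows "\<bar>measure M {\<omega> \<in> space M. F (\<lambda>i. X i \<omega>) = A} - 1 / real CARD('n)\<bar>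
           \<le> exp (- \<epsilon> * \<delta> * real CARD('k) / (real CARD('r)) ^ 2)"
proof -
  interpret prob_space M by fact
  have "a \<in> {x. a dvd x}" by simp
  then have "{x. a dvd x} \<noteq> {0}" using \<open>a \<noteq> 0\<close> by (metis singletonD)
  then have "finite_quotient {x. a dvd x}" by (rule assms(3)[OF is_ideal_multiples])
  then have fin: "finite (UNIV :: 'r set)"
    using finite_ring_if_finite_quotient assms(6,9,10) by blast
  have indep: "indep_vars (\<lambda>_. count_space UNIV) X UNIV" and bal: "\<And>i. balanced_rv M \<epsilon> (X i)"
    using \<open>balanced_vec M \<epsilon> X\<close> by (simp_all add: balanced_vec_def)
  have "\<And>i. balanced_distr \<epsilon> (\<lambda>r. prob {\<omega> \<in> space M. X i \<omega> = r})"
    by (rule balanced_rv_distr[OF fin bal])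
  from code_equidistribution[OF fin assms(16,17) this] \<open>\<epsilon> > 0\<close>
  have "\<bar>(\<Sum>x | F x = A. \<Prod>i\<in>UNIV. prob {\<omega> \<in> space M. X i \<omega> = x i}) - 1 / real CARD('n)\<bar>
      \<le> exp (- \<epsilon> * (\<delta> * real CARD('k)) / (real CARD('r))\<^sup>2)" by simp
  moreover have "prob {\<omega> \<in> space M. F (\<lambda>i. X i \<omega>) = A}
      = (\<Sum>x | F x = A. \<Prod>i\<in>UNIV. prob {\<omega> \<in> space M. X i \<omega> = x i})"
    using prob_indep_vector_in[OF fin indep, of "{x. F x = A}"] by simp
  ultimately show ?thesis by (simp add: mult.assoc)
qed

end
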